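(* Let $g\in H(\mathbb{D})$, let $\nu$ be a weight satisfying property (U) and let $\mu$ be a weight. Then the following are equivalent: (1) $S_g: H^{\infty}_\nu\rightarrow \mathcal{B}^{\infty}_\mu$ is compact; (2) $\lim_{|z|\rightarrow1^-}\frac{\mu(z)}{(1-|z|^2)\nu(z)}|g(z)|=0$. If, in addition, $\nu$ and $\mu$ are typical weights, then (1) and (2) are also equivalent to (3) $S_g: H^{0}_\nu\rightarrow \mathcal{B}^{0}_\mu$ is compact.
   Context: $\mathbb{D}$ is the open unit disk and $H(\mathbb{D})$ the space of analytic functions on $\mathbb{D}$. A weight is a non-negative continuous function $\nu$ on $\mathbb{D}$ with $\nu(z)=\nu(|z|)$ for all $z$, which is decreasing in $|z|$. For a weight $\nu$: $H^{\infty}_\nu=\{f\in H(\mathbb{D}): \sup_{z}\nu(z)|f(z)|<\infty\}$, $H^{0}_\nu=\{f\in H(\mathbb{D}): \lim_{|z|\to1^-}\nu(z)|f(z)|=0\}$, $\mathcal{B}^{\infty}_\nu=\{f\in H(\mathbb{D}): |f(0)|+\sup_{z}\nu(z)|f'(z)|<\infty\}$, $\mathcal{B}^{0}_\nu=\{f\in H(\mathbb{D}): \lim_{|z|\to1^-}\nu(z)|f'(z)|=0\}$, each with its natural norm. A weight $\nu$ is typical if $\lim_{|z|\to1^-}\nu(z)=0$. A weight $\nu$ satisfies property (U) if there is $\alpha>0$ such that $r\mapsto \nu(r)/(1-r^2)^\alpha$ is almost increasing on $[0,1)$ (i.e. there is $C>0$ with $h(r)\le C h(s)$ whenever $r\le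 s$), equivalently $\inf_n \nu(1-2^{-(n+1)})/\nu(1-2^{-n})>0$. For $g\in H(\mathbb{D})$, $(S_gf)(z)=\int_0^z f'(\omega)g(\omega)\,d\omega$. *)

theory Defs
  imports "HOL-Complex_Analysis.Complex_Analysis"
begin

text \<open>A radial weight is represented by its profile nu on [0,1); nu(z) = nu(cmod z).\<close>
definition weight :: "(real \<Rightarrow> real) \<Rightarrow> bool" where
  "weight nu \<longleftrightarrow> continuous_on {0..<1} nu \<and> (\<forall>r\<in>{0..<1}. nu r \<ge> 0)
     \<and> (\<forall>r\<in>{0..<1}. \<forall>s\<in>{0..<1}. r \<le> s \<longrightarrow> nu s \<le> nu r)"

definition typical_weight :: "(real \<Rightarrow> real) \<Rightarrow> bool" where
  "typical_weight nu \<longleftrightarrow> (nu \<longlongrightarrow> 0) (at_left 1)"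

text \<open>Property (U); positivity of nu is implicit in the paper (the equivalent
  ratio formulation divides by nu).\<close>
definition property_U :: "(real \<Rightarrow> real) \<Rightarrow> bool" where
  "property_U nu \<longleftrightarrow> (\<forall>r\<in>{0..<1}. nu r > 0) \<and>
     (\<exists>\<alpha>>0. \<exists>C>0. \<forall>r\<in>{0..<1}. \<forall>s\<in>{0..<1}. r \<le> s \<longrightarrow>
        nu r / (1 - r\<^sup>2) powr \<alpha> \<le> C * (nu s / (1 - s\<^sup>2) powr \<alpha>))"

definition to_zero_at_boundary :: "(complex \<Rightarrow> real) \<Rightarrow> bool" where
  "to_zero_at_boundary F \<longleftrightarrow>
     (\<forall>e>0. \<exists>r<1. \<forall>z. r < cmod z \<and> cmod z < 1 \<longrightarrow> \<bar>F z\<bar> < e)"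

definition Hinf :: "(real \<Rightarrow> real) \<Rightarrow> (complex \<Rightarrow> complex) set" where
  "Hinf nu = {f. f holomorphic_on ball 0 1 \<and>
     bdd_above ((\<lambda>z. nu (cmod z) * cmod (f z)) ` ball 0 1)}"

definition H0 :: "(real \<Rightarrow> real) \<Rightarrow> (complex \<Rightarrow> complex) set" where
  "H0 nu = {f. f holomorphic_on ball 0 1 \<and>
     to_zero_at_boundary (\<lambda>z. nu (cmod z) * cmod (f z))}"

definition Hnorm :: "(real \<Rightarrow> real) \<Rightarrow> (complex \<Rightarrow> complex) \<Rightarrow> real" where
  "Hnorm nu f = (SUP z\<in>ball 0 1. nu (cmod z) * cmod (f z))"

definition Binf :: "(real \<Rightarrow> real) \<Rightarrow> (complex \<Rightarrow> complex) set" where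
  "Binf mu = {f. f holomorphic_on ball 0 1 \<and>
     bdd_above ((\<lambda>z. mu (cmod z) * cmod (deriv f z)) ` ball 0 1)}"

definition B0 :: "(real \<Rightarrow> real) \<Rightarrow> (complex \<Rightarrow> complex) set" where
  "B0 mu = {f. f holomorphic_on ball 0 1 \<and>
     to_zero_at_boundary (\<lambda>z. mu (cmod z) * cmod (deriv f z))}"

definition Bnorm :: "(real \<Rightarrow> real) \<Rightarrow> (complex \<Rightarrow> complex) \<Rightarrow> real" where
  "Bnorm mu f = cmod (f 0) + (SUP z\<in>ball 0 1. mu (cmod z) * cmod (deriv f z))"

definition Sg :: "(complex \<Rightarrow> complex) \<Rightarrow> (complex \<Rightarrow> complex) \<Rightarrow> complex \<Rightarrow> complex" where
  "Sg g f z = contour_integral (linepath 0 z) (\<lambda>w. deriv f w * g w)"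

definition compact_op ::
  "('a \<Rightarrow> 'b) \<Rightarrow> 'a set \<Rightarrow> ('a \<Rightarrow> real) \<Rightarrow> 'b set \<Rightarrow> ('b \<Rightarrow> real)
    \<Rightarrow> ('b \<Rightarrow> 'b \<Rightarrow> 'b) \<Rightarrow> bool" where
  "compact_op T X nX Y nY sub \<longleftrightarrow> (\<forall>f\<in>X. T f \<in> Y) \<and>
     (\<forall>fs :: nat \<Rightarrow> 'a. (\<forall>n. fs n \<in> X \<and> nX (fs n) \<le> 1) \<longrightarrow>
        (\<exists>r h. strict_mono r \<and> h \<in> Y \<and> (\<lambda>n. nY (sub (T (fs (r n))) h)) \<longlonglongrightarrow> 0))"

definition fsub :: "(complex \<Rightarrow> complex) \<Rightarrow> (complex \<Rightarrow> complex) \<Rightarrow> complex \<Rightarrow> complex" where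
  "fsub f h = (\<lambda>z. f z - h z)"

end

(* Property (U) gives a doubling bound nu(r) <= L nu((1+r)/2).  With the Cauchy estimate on the disc
   of radius (1-|z|)/2 it yields |f'(z)| <= K ||f|| / ((1-|z|^2) nu(|z|)) for f in H^inf_nu, hence
   mu(|z|) |(S_g f)'(z)| <= K ||f|| R(z), where R(z) = mu(|z|) |g(z)| / ((1-|z|^2) nu(|z|)).

   If R vanishes at the boundary, Montel's theorem extracts from a bounded sequence a subsequence
   converging locally uniformly, and the images under S_g converge in norm: near the boundary by the
   estimate above, on compact subdiscs because the derivatives converge uniformly there.

   Conversely, let alpha be the exponent of (U) and N > alpha an integer.  For a suitable M the
   functions T_a(z) = (1-|a|^2)^N / (M nu(|a|) (1 - conj(a) z)^N) lie in the unit ball of H^inf_nu,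
   are bounded, satisfy |T_a'(a)| = N |a| / (M (1-|a|^2) nu(|a|)), and T_a' -> 0 pointwise as
   |a| -> 1.  If R(a_n) >= eps along a_n with |a_n| -> 1, compactness gives a norm limit h of a
   subsequence of S_g T_{a_n}; pointwise convergence forces mu h' = 0, so
   (N/M) |a_n| R(a_n) = mu(|a_n|) |T_{a_n}'(a_n) g(a_n)| -> 0 along it, a contradiction. *)

theory Submission
  imports Defs
begin

lemma weight_nonneg: "weight nu \<Longrightarrow> 0 \<le> r \<Longrightarrow> r < 1 \<Longrightarrow> 0 \<le> nu r"
  unfolding weight_def by auto

lemma weight_antimono: "weight nu \<Longrightarrow> 0 \<le> r \<Longrightarrow> r \<le> s \<Longrightarrow> s < 1 \<Longrightarrow> nu s \<le> nu r"
  unfolding weight_def by auto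

lemma continuous_on_weight_norm:
  assumes "weight nu"
  shows "continuous_on (ball 0 1) (\<lambda>z::complex. nu (cmod z))"
proof (rule continuous_on_compose2[OF _ continuous_on_norm_id])
  show "continuous_on {0..<1} nu" using assms unfolding weight_def by blast
qed auto

lemma property_U_pos: "property_U nu \<Longrightarrow> 0 \<le> r \<Longrightarrow> r < 1 \<Longrightarrow> 0 < nu r"
  unfolding property_U_def by auto

text \<open>Property (U) for the exponent \<open>\<alpha>\<close> and the constant \<open>C\<close>, with the denominators cleared.\<close>

definition almost_increasing_quotient :: "(real \<Rightarrow> real) \<Rightarrow> real \<Rightarrow> real \<Rightarrow> bool" where
  "almost_increasing_quotient nu \<alpha> C \<longleftrightarrow> (\<forall>r s. 0 \<le> r \<longrightarrow> r \<le> s \<longrightarrow> s < 1 \<longrightarrow>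
     nu r * (1 - s\<^sup>2) powr \<alpha> \<le> C * nu s * (1 - r\<^sup>2) powr \<alpha>)"

lemma property_UE:
  assumes "property_U nu"
  obtains \<alpha> C where "0 < \<alpha>" "1 \<le> C" "almost_increasing_quotient nu \<alpha> C"
proof -
  obtain \<alpha> C where "0 < \<alpha>" "0 < C" and U: "\<forall>r\<in>{0..<1}. \<forall>s\<in>{0..<1}. r \<le> s \<longrightarrow>
      nu r / (1 - r\<^sup>2) powr \<alpha> \<le> C * (nu s / (1 - s\<^sup>2) powr \<alpha>)"
    using assms unfolding property_U_def by blast
  have "nu r * (1 - s\<^sup>2) powr \<alpha> \<le> max C 1 * nu s * (1 - r\<^sup>2) powr \<alpha>"
    if "0 \<le> r" "r \<le> s" "s < 1" for r s
  proof -
    have pos: "0 < 1 - r\<^sup>2" "0 < 1 - s\<^sup>2" "0 < nu s"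
      using that property_U_pos[OF assms, of s] by (auto simp: abs_square_less_1)
    have "nu r / (1 - r\<^sup>2) powr \<alpha> \<le> C * (nu s / (1 - s\<^sup>2) powr \<alpha>)"
      using U that by auto
    then have "nu r * (1 - s\<^sup>2) powr \<alpha> \<le> C * nu s * (1 - r\<^sup>2) powr \<alpha>"
      using pos by (simp add: field_simps)
    also have "\<dots> \<le> max C 1 * nu s * (1 - r\<^sup>2) powr \<alpha>"
      using pos by (intro mult_right_mono) auto
    finally show ?thesis .
  qed
  then show ?thesis
    using that[of \<alpha> "max C 1"] \<open>0 < \<alpha>\<close> unfolding almost_increasing_quotient_def by auto
qed

lemma property_U_doubling:
  assumes "property_U nu"
  obtains L where "\<And>r. 0 \<le> r \<Longrightarrow> r < 1 \<Longrightarrow> nu r \<le> L * nu ((1 + r) / 2)"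
proof -
  obtain \<alpha> C where "0 < \<alpha>" and U: "almost_increasing_quotient nu \<alpha> C"
    using property_UE[OF assms] by blast
  have "nu r \<le> C * 2 powr \<alpha> * nu ((1 + r) / 2)" if r: "0 \<le> r" "r < 1" for r
  proof -
    define s where "s = (1 + r) / 2"
    have pos: "0 < 1 - r\<^sup>2" "0 < nu r" using r property_U_pos[OF assms r]
      by (auto simp: abs_square_less_1)
    have "(1 - r\<^sup>2) / 2 \<le> 1 - s\<^sup>2"
      using r zero_le_power2[of "1 - r"] by (simp add: s_def power2_eq_square field_simps)
    then have "nu r * ((1 - r\<^sup>2) powr \<alpha> / 2 powr \<alpha>) \<le> nu r * (1 - s\<^sup>2) powr \<alpha>"
      using pos \<open>0 < \<alpha>\<close> by (auto simp: powr_divide[symmetric] intro!: mult_left_mono powr_mono2)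
    also have "\<dots> \<le> C * nu s * (1 - r\<^sup>2) powr \<alpha>"
      using U r unfolding almost_increasing_quotient_def by (simp add: s_def)
    finally show ?thesis using pos by (simp add: s_def field_simps)
  qed
  then show ?thesis using that by blast
qed

lemma to_zero_at_boundary_bdd_above:
  assumes "continuous_on (ball 0 1) F" "to_zero_at_boundary F"
  shows "bdd_above (F ` ball 0 1)"
proof -
  obtain r where "r < 1" and r: "\<And>z. r < cmod z \<and> cmod z < 1 \<Longrightarrow> \<bar>F z\<bar> < 1"
    using assms(2) unfolding to_zero_at_boundary_def by (meson zero_less_one)
  have "cball 0 (max r 0) \<subseteq> ball 0 1" using \<open>r < 1\<close> by auto
  then have "compact (F ` cball 0 (max r 0))"
    by (intro compact_continuous_image continuous_on_subset[OF assms(1)]) auto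
  then obtain B where B: "\<forall>x\<in>F ` cball 0 (max r 0). \<bar>x\<bar> \<le> B"
    using compact_imp_bounded bounded_real by blast
  have "F z \<le> max B 1" if "z \<in> ball 0 1" for z
  proof (cases "r < cmod z")
    case True
    then have "\<bar>F z\<bar> < 1" using r that by simp
    then show ?thesis by linarith
  next
    case False
    then have "\<bar>F z\<bar> \<le> B" using B by auto
    then show ?thesis by linarith
  qed
  then show ?thesis by (intro bdd_aboveI2)
qed

lemma to_zero_at_boundary_cmult:
  assumes "to_zero_at_boundary F"
  shows "to_zero_at_boundary (\<lambda>z. c * F z)"
  unfolding to_zero_at_boundary_def
proof (intro allI impI)
  fix e :: real assume "0 < e"
  then have "0 < e / (\<bar>c\<bar> + 1)" by (simp add: add_nonneg_pos)
  then obtain r where "r < 1" and r: "\<And>z. r < cmod z \<and> cmod z < 1 \<Longrightarrow> \<bar>F z\<bar> < e / (\<bar>c\<bar> + 1)"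
    using assms unfolding to_zero_at_boundary_def by blast
  have "\<bar>c * F z\<bar> < e" if "r < cmod z \<and> cmod z < 1" for z
  proof -
    have "\<bar>c * F z\<bar> \<le> (\<bar>c\<bar> + 1) * \<bar>F z\<bar>" by (simp add: abs_mult mult_right_mono)
    also have "\<dots> < (\<bar>c\<bar> + 1) * (e / (\<bar>c\<bar> + 1))"
      using r[OF that] by (intro mult_strict_left_mono) (auto simp: add_nonneg_pos)
    also have "\<dots> = e" by (simp add: add_nonneg_pos)
    finally show ?thesis .
  qed
  then show "\<exists>r<1. \<forall>z. r < cmod z \<and> cmod z < 1 \<longrightarrow> \<bar>c * F z\<bar> < e"
    using \<open>r < 1\<close> by blast
qed

lemma to_zero_at_boundary_le:
  assumes "to_zero_at_boundary G" "\<And>z. z \<in> ball 0 1 \<Longrightarrow> \<bar>F z\<bar> \<le> G z"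
  shows "to_zero_at_boundary F"
  unfolding to_zero_at_boundary_def
proof (intro allI impI)
  fix e :: real assume "0 < e"
  then obtain r where "r < 1" and r: "\<And>z. r < cmod z \<and> cmod z < 1 \<Longrightarrow> \<bar>G z\<bar> < e"
    using assms(1) unfolding to_zero_at_boundary_def by blast
  have "\<bar>F z\<bar> < e" if "r < cmod z \<and> cmod z < 1" for z
    using assms(2)[of z] r[OF that] that by simp
  then show "\<exists>r<1. \<forall>z. r < cmod z \<and> cmod z < 1 \<longrightarrow> \<bar>F z\<bar> < e"
    using \<open>r < 1\<close> by blast
qed

lemma typical_weight_to_zero_at_boundary:
  assumes "typical_weight nu"
  shows "to_zero_at_boundary (\<lambda>z. nu (cmod z))"
  unfolding to_zero_at_boundary_def
proof (intro allI impI)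
  fix e :: real assume "0 < e"
  then have "\<forall>\<^sub>F s in at_left 1. \<bar>nu s\<bar> < e"
    using assms unfolding typical_weight_def tendsto_iff by (auto simp: dist_real_def)
  then show "\<exists>r<1. \<forall>z. r < cmod z \<and> cmod z < 1 \<longrightarrow> \<bar>nu (cmod z)\<bar> < e"
    unfolding eventually_at_left_field by blast
qed

lemma not_to_zero_at_boundaryE:
  assumes "\<not> to_zero_at_boundary F"
  obtains \<epsilon> a where "0 < \<epsilon>" "\<And>n. cmod (a n) < 1" "(\<lambda>n. cmod (a n)) \<longlonglongrightarrow> 1"
    "\<And>n. \<epsilon> \<le> \<bar>F (a n)\<bar>"
proof -
  obtain \<epsilon> where "0 < \<epsilon>" and \<epsilon>: "\<forall>r<1. \<exists>z. r < cmod z \<and> cmod z < 1 \<and> \<not> \<bar>F z\<bar> < \<epsilon>"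
    using assms unfolding to_zero_at_boundary_def by blast
  have "\<exists>z. 1 - inverse (Suc n) < cmod z \<and> cmod z < 1 \<and> \<epsilon> \<le> \<bar>F z\<bar>" for n
    using \<epsilon>[rule_format, of "1 - inverse (Suc n)"] by (auto simp: not_less)
  then obtain a where a: "\<And>n. 1 - inverse (Suc n) < cmod (a n)" "\<And>n. cmod (a n) < 1"
    "\<And>n. \<epsilon> \<le> \<bar>F (a n)\<bar>"
    by metis
  have "(\<lambda>n. 1 - inverse (Suc n)) \<longlonglongrightarrow> 1 - 0"
    by (intro tendsto_intros LIMSEQ_inverse_real_of_nat)
  then have lim: "(\<lambda>n. 1 - inverse (Suc n)) \<longlonglongrightarrow> 1" by simp
  have "\<forall>n. 1 - inverse (Suc n) \<le> cmod (a n)" "\<forall>n. cmod (a n) \<le> 1"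
    using a by (auto intro: less_imp_le)
  then have "(\<lambda>n. cmod (a n)) \<longlonglongrightarrow> 1"
    by (rule tendsto_sandwich[OF always_eventually always_eventually lim tendsto_const])
  then show ?thesis by (rule that[OF \<open>0 < \<epsilon>\<close> a(2) _ a(3)])
qed

lemma continuous_on_weighted_norm:
  "weight nu \<Longrightarrow> f holomorphic_on ball 0 1 \<Longrightarrow>
     continuous_on (ball 0 1) (\<lambda>z. nu (cmod z) * cmod (f z))"
  by (intro continuous_intros continuous_on_weight_norm holomorphic_on_imp_continuous_on)

lemma HinfI:
  "f holomorphic_on ball 0 1 \<Longrightarrow> \<forall>z\<in>ball 0 1. nu (cmod z) * cmod (f z) \<le> B \<Longrightarrow> f \<in> Hinf nu"
  unfolding Hinf_def by (auto intro: bdd_aboveI2)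

lemma HinfE:
  assumes "f \<in> Hinf nu"
  obtains B where "f holomorphic_on ball 0 1" "\<forall>z\<in>ball 0 1. nu (cmod z) * cmod (f z) \<le> B"
  using assms unfolding Hinf_def bdd_above_def by auto

lemma Hnorm_upper: "f \<in> Hinf nu \<Longrightarrow> z \<in> ball 0 1 \<Longrightarrow> nu (cmod z) * cmod (f z) \<le> Hnorm nu f"
  unfolding Hinf_def Hnorm_def by (auto intro: cSUP_upper)

lemma Hnorm_le: "\<forall>z\<in>ball 0 1. nu (cmod z) * cmod (f z) \<le> B \<Longrightarrow> Hnorm nu f \<le> B"
  unfolding Hnorm_def by (intro cSUP_least) auto

lemma Bnorm_upper:
  assumes "f \<in> Binf mu" "z \<in> ball 0 1"
  shows "mu (cmod z) * cmod (deriv f z) \<le> Bnorm mu f"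
proof -
  have "mu (cmod z) * cmod (deriv f z) \<le> (SUP w\<in>ball 0 1. mu (cmod w) * cmod (deriv f w))"
    using assms unfolding Binf_def by (auto intro: cSUP_upper)
  then show ?thesis unfolding Bnorm_def using norm_ge_zero[of "f 0"] by linarith
qed

lemma deriv_fsub:
  assumes "f holomorphic_on ball 0 1" "h holomorphic_on ball 0 1" "z \<in> ball 0 1"
  shows "deriv (fsub f h) z = deriv f z - deriv h z"
  unfolding fsub_def using assms
  by (intro deriv_diff) (auto intro: holomorphic_on_imp_differentiable_at)

lemma Binf_fsub:
  assumes "weight mu" "f \<in> Binf mu" "h \<in> Binf mu"
  shows "fsub f h \<in> Binf mu"
proof -
  obtain Bf Bh where f: "f holomorphic_on ball 0 1" "\<forall>z\<in>ball 0 1. mu (cmod z) * cmod (deriv f z) \<le> Bf"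
    and h: "h holomorphic_on ball 0 1" "\<forall>z\<in>ball 0 1. mu (cmod z) * cmod (deriv h z) \<le> Bh"
    using assms(2,3) unfolding Binf_def bdd_above_def by auto
  have "mu (cmod z) * cmod (deriv (fsub f h) z) \<le> Bf + Bh" if z: "z \<in> ball 0 1" for z
  proof -
    have "mu (cmod z) * cmod (deriv (fsub f h) z) \<le>
        mu (cmod z) * cmod (deriv f z) + mu (cmod z) * cmod (deriv h z)"
      using weight_nonneg[OF assms(1), of "cmod z"] z
      by (auto simp: deriv_fsub[OF f(1) h(1) z] distrib_left[symmetric]
               intro!: mult_left_mono norm_triangle_ineq4)
    then show ?thesis using f(2) h(2) z by fastforce
  qed
  moreover have "fsub f h holomorphic_on ball 0 1"
    unfolding fsub_def using f(1) h(1) by (intro holomorphic_intros)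
  ultimately show ?thesis unfolding Binf_def by (auto intro!: bdd_aboveI2[where M = "Bf + Bh"])
qed

lemma H0_subset_Hinf: "weight nu \<Longrightarrow> H0 nu \<subseteq> Hinf nu"
  unfolding H0_def Hinf_def
  by (auto intro!: to_zero_at_boundary_bdd_above continuous_on_weighted_norm)

lemma B0_subset_Binf: "weight mu \<Longrightarrow> B0 mu \<subseteq> Binf mu"
  unfolding B0_def Binf_def
  by (auto intro!: to_zero_at_boundary_bdd_above continuous_on_weighted_norm holomorphic_deriv)

lemma bounded_holomorphic_in_H0:
  assumes "weight nu" "typical_weight nu" "f holomorphic_on ball 0 1" "bounded (f ` ball 0 1)"
  shows "f \<in> H0 nu"
proof -
  obtain B where B: "\<forall>z\<in>ball 0 1. cmod (f z) \<le> B"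
    using assms(4) unfolding bounded_iff by blast
  have "to_zero_at_boundary (\<lambda>z. nu (cmod z) * cmod (f z))"
  proof (rule to_zero_at_boundary_le)
    show "to_zero_at_boundary (\<lambda>z. B * nu (cmod z))"
      by (rule to_zero_at_boundary_cmult[OF typical_weight_to_zero_at_boundary[OF assms(2)]])
    fix z :: complex assume "z \<in> ball 0 1"
    then have "cmod (f z) \<le> B" using B by blast
    then show "\<bar>nu (cmod z) * cmod (f z)\<bar> \<le> B * nu (cmod z)"
      using \<open>z \<in> ball 0 1\<close> weight_nonneg[OF assms(1), of "cmod z"]
      by (simp add: mult.commute mult_right_mono)
  qed
  then show ?thesis unfolding H0_def using assms(3) by blast
qed

lemma has_field_derivative_Sg:
  assumes f: "f holomorphic_on ball 0 1" and g: "g holomorphic_on ball 0 1"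
    and z: "z \<in> ball 0 1"
  shows "(Sg g f has_field_derivative deriv f z * g z) (at z)"
proof -
  let ?\<phi> = "\<lambda>w. deriv f w * g w"
  have hol: "?\<phi> holomorphic_on ball 0 1"
    by (intro holomorphic_intros f g) auto
  have "((\<lambda>x. contour_integral (linepath 0 x) ?\<phi>) has_field_derivative ?\<phi> z) (at z within ball 0 1)"
  proof (rule triangle_contour_integrals_convex_primitive)
    show "continuous_on (ball 0 1) ?\<phi>"
      using hol holomorphic_on_imp_continuous_on by blast
    fix b c assume "b \<in> ball (0::complex) 1" "c \<in> ball (0::complex) 1"
    then have "path_image (linepath 0 b +++ linepath b c +++ linepath c 0) \<subseteq> ball 0 1"
      by (simp add: path_image_join closed_segment_subset)
    then have "(?\<phi> has_contour_integral 0) (linepath 0 b +++ linepath b c +++ linepath c 0)"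
      by (intro Cauchy_theorem_convex_simple[OF hol]) auto
    then show "contour_integral (linepath 0 b) ?\<phi> + contour_integral (linepath b c) ?\<phi> +
               contour_integral (linepath c 0) ?\<phi> = 0"
      by (rule has_chain_integral_chain_integral3)
  qed (use z in auto)
  then show ?thesis
    unfolding Sg_def using at_within_open[OF z open_ball] by simp
qed

lemma holomorphic_on_Sg:
  "f holomorphic_on ball 0 1 \<Longrightarrow> g holomorphic_on ball 0 1 \<Longrightarrow> Sg g f holomorphic_on ball 0 1"
  using has_field_derivative_Sg by (auto simp: holomorphic_on_open) blast

lemma deriv_Sg:
  "f holomorphic_on ball 0 1 \<Longrightarrow> g holomorphic_on ball 0 1 \<Longrightarrow> z \<in> ball 0 1 \<Longrightarrow>
     deriv (Sg g f) z = deriv f z * g z"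
  using has_field_derivative_Sg DERIV_imp_deriv by blast

lemma Sg_0: "Sg g f 0 = 0"
  by (simp add: Sg_def)

lemma Bnorm_fsub_Sg:
  assumes "f holomorphic_on ball 0 1" "h holomorphic_on ball 0 1" "g holomorphic_on ball 0 1"
  shows "Bnorm mu (fsub (Sg g f) (Sg g h)) =
    (SUP z\<in>ball 0 1. mu (cmod z) * cmod (deriv (Sg g (\<lambda>w. f w - h w)) z))"
proof -
  have "deriv (fsub (Sg g f) (Sg g h)) z = deriv (Sg g (\<lambda>w. f w - h w)) z"
    if "z \<in> ball 0 1" for z
  proof -
    have "(\<lambda>w. f w - h w) holomorphic_on ball 0 1" using assms(1,2) by (intro holomorphic_intros)
    moreover have "deriv (\<lambda>w. f w - h w) z = deriv f z - deriv h z"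
      using assms(1,2) that by (intro deriv_diff) (auto intro: holomorphic_on_imp_differentiable_at)
    ultimately have "deriv (Sg g (\<lambda>w. f w - h w)) z = (deriv f z - deriv h z) * g z"
      using assms(3) that by (simp add: deriv_Sg)
    also have "\<dots> = deriv (fsub (Sg g f) (Sg g h)) z"
      using assms that by (simp add: deriv_fsub holomorphic_on_Sg deriv_Sg algebra_simps)
    finally show ?thesis by simp
  qed
  then have "(SUP z\<in>ball 0 1. mu (cmod z) * cmod (deriv (fsub (Sg g f) (Sg g h)) z)) =
      (SUP z\<in>ball 0 1. mu (cmod z) * cmod (deriv (Sg g (\<lambda>w. f w - h w)) z))"
    by (intro SUP_cong) simp_all
  then show ?thesis
    unfolding Bnorm_def by (simp add: fsub_def Sg_0)
qed

lemma norm_deriv_le_circle_bound: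
  assumes "f holomorphic_on S" "cball z \<rho> \<subseteq> S" "0 < \<rho>"
    and "\<And>w. dist z w = \<rho> \<Longrightarrow> cmod (f w) \<le> B"
  shows "cmod (deriv f z) \<le> B / \<rho>"
proof -
  have "cmod ((deriv ^^ 1) f z) \<le> fact 1 * B / \<rho> ^ 1"
  proof (rule Cauchy_inequality)
    show "f holomorphic_on ball z \<rho>"
      using assms(1,2) ball_subset_cball holomorphic_on_subset by blast
    show "continuous_on (cball z \<rho>) f"
      using assms(1,2) holomorphic_on_imp_continuous_on continuous_on_subset by blast
  qed (use assms(3,4) in \<open>auto simp: dist_norm\<close>)
  then show ?thesis by simp
qed

lemma norm_le_of_weighted_bound:
  assumes "weight nu" "\<forall>w\<in>ball 0 1. nu (cmod w) * cmod (f w) \<le> B"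
    and "cmod w \<le> s" "s < 1" "0 < nu s"
  shows "cmod (f w) \<le> B / nu s"
proof -
  have "nu s * cmod (f w) \<le> nu (cmod w) * cmod (f w)"
    using weight_antimono[OF assms(1) _ assms(3,4)] by (intro mult_right_mono) auto
  also have "\<dots> \<le> B" using assms(2-4) by auto
  finally show ?thesis using assms(5) by (simp add: field_simps)
qed

lemma weighted_norm_deriv_le:
  assumes w: "weight nu" and pos: "\<And>r. 0 \<le> r \<Longrightarrow> r < 1 \<Longrightarrow> 0 < nu r"
    and L: "\<And>r. 0 \<le> r \<Longrightarrow> r < 1 \<Longrightarrow> nu r \<le> L * nu ((1 + r) / 2)"
    and f: "f holomorphic_on ball 0 1" and B: "\<forall>w\<in>ball 0 1. nu (cmod w) * cmod (f w) \<le> B"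
    and z: "z \<in> ball 0 1"
  shows "(1 - (cmod z)\<^sup>2) * nu (cmod z) * cmod (deriv f z) \<le> 4 * L * B"
proof -
  define r where "r = cmod z"
  define s where "s = (1 + r) / 2"
  have r: "0 \<le> r" "r < 1" using z by (auto simp: r_def)
  then have "s < 1" "0 < nu r" "0 < nu s" using pos by (auto simp: s_def)
  have "0 \<le> nu 0 * cmod (f 0)" using pos[of 0] by simp
  also have "\<dots> \<le> B" using bspec[OF B, of 0] by simp
  finally have "0 \<le> B" .
  have near: "cmod w \<le> s" if "w \<in> cball z ((1 - r) / 2)" for w
  proof -
    have "cmod w \<le> cmod z + cmod (w - z)" by (rule norm_triangle_sub)
    also have "\<dots> \<le> s" using that by (simp add: dist_norm norm_minus_commute r_def s_def)
    finally show ?thesis .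
  qed
  have "cball z ((1 - r) / 2) \<subseteq> ball 0 1"
    using near \<open>s < 1\<close> by fastforce
  then have "cmod (deriv f z) \<le> B / nu s / ((1 - r) / 2)"
    using r near norm_le_of_weighted_bound[OF w B _ \<open>s < 1\<close> \<open>0 < nu s\<close>]
    by (intro norm_deriv_le_circle_bound[OF f]) auto
  then have "(1 - r\<^sup>2) * nu r * cmod (deriv f z) \<le> (1 - r\<^sup>2) * nu r * (B / nu s / ((1 - r) / 2))"
    using r \<open>0 < nu r\<close> by (intro mult_left_mono) (auto simp: abs_square_le_1)
  also have "\<dots> = 2 * (1 + r) * B * (nu r / nu s)"
  proof -
    have "1 - r\<^sup>2 = (1 - r) * (1 + r)" by (simp add: power2_eq_square algebra_simps)
    moreover have "1 - r \<noteq> 0" using r by simp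
    ultimately show ?thesis using \<open>0 < nu s\<close> by (simp add: field_simps)
  qed
  also have "\<dots> \<le> 4 * B * L"
  proof (rule mult_mono)
    show "2 * (1 + r) * B \<le> 4 * B" using r \<open>0 \<le> B\<close> by (intro mult_right_mono) auto
    show "nu r / nu s \<le> L" using L[OF r] \<open>0 < nu s\<close> by (simp add: s_def field_simps)
  qed (use \<open>0 \<le> B\<close> r \<open>0 < nu r\<close> \<open>0 < nu s\<close> in auto)
  finally show ?thesis by (simp add: r_def mult_ac)
qed

lemma norm_deriv_le_Hinf_bound:
  assumes "weight nu" "property_U nu"
  obtains K where
    "\<And>f B z. f holomorphic_on ball 0 1 \<Longrightarrow> \<forall>w\<in>ball 0 1. nu (cmod w) * cmod (f w) \<le> B \<Longrightarrow>
       z \<in> ball 0 1 \<Longrightarrow> (1 - (cmod z)\<^sup>2) * nu (cmod z) * cmod (deriv f z) \<le> K * B"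
proof -
  obtain L where L: "\<And>r. 0 \<le> r \<Longrightarrow> r < 1 \<Longrightarrow> nu r \<le> L * nu ((1 + r) / 2)"
    using property_U_doubling[OF assms(2)] by blast
  show ?thesis
    using that[of "4 * L"] weighted_norm_deriv_le[OF assms(1) property_U_pos[OF assms(2)] L] by blast
qed

definition Sg_ratio :: "(real \<Rightarrow> real) \<Rightarrow> (real \<Rightarrow> real) \<Rightarrow> (complex \<Rightarrow> complex) \<Rightarrow> complex \<Rightarrow> real"
  where "Sg_ratio nu mu g z = mu (cmod z) / ((1 - (cmod z)\<^sup>2) * nu (cmod z)) * cmod (g z)"

lemma Sg_ratio_nonneg:
  assumes "weight nu" "weight mu" "z \<in> ball 0 1"
  shows "0 \<le> Sg_ratio nu mu g z"
  using assms weight_nonneg[OF assms(1), of "cmod z"] weight_nonneg[OF assms(2), of "cmod z"]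
  by (simp add: Sg_ratio_def abs_square_le_1)

lemma weighted_deriv_Sg_le_ratio:
  assumes "weight nu" "property_U nu" "weight mu" "g holomorphic_on ball 0 1"
  obtains K where
    "\<And>f B z. f holomorphic_on ball 0 1 \<Longrightarrow> \<forall>w\<in>ball 0 1. nu (cmod w) * cmod (f w) \<le> B \<Longrightarrow>
       z \<in> ball 0 1 \<Longrightarrow> mu (cmod z) * cmod (deriv (Sg g f) z) \<le> K * B * Sg_ratio nu mu g z"
proof -
  obtain K where K: "\<And>f B z. f holomorphic_on ball 0 1 \<Longrightarrow>
      \<forall>w\<in>ball 0 1. nu (cmod w) * cmod (f w) \<le> B \<Longrightarrow>
      z \<in> ball 0 1 \<Longrightarrow> (1 - (cmod z)\<^sup>2) * nu (cmod z) * cmod (deriv f z) \<le> K * B"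
    using norm_deriv_le_Hinf_bound[OF assms(1,2)] by blast
  have "mu (cmod z) * cmod (deriv (Sg g f) z) \<le> K * B * Sg_ratio nu mu g z"
    if f: "f holomorphic_on ball 0 1" and B: "\<forall>w\<in>ball 0 1. nu (cmod w) * cmod (f w) \<le> B"
      and z: "z \<in> ball 0 1" for f B z
  proof -
    have "0 < (1 - (cmod z)\<^sup>2) * nu (cmod z)"
      using z property_U_pos[OF assms(2), of "cmod z"] by (simp add: abs_square_less_1)
    then have "cmod (deriv f z) \<le> K * B / ((1 - (cmod z)\<^sup>2) * nu (cmod z))"
      using K[OF f B z] by (simp add: field_simps)
    then have "mu (cmod z) * cmod (deriv f z) * cmod (g z) \<le>
        mu (cmod z) * (K * B / ((1 - (cmod z)\<^sup>2) * nu (cmod z))) * cmod (g z)"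
      using weight_nonneg[OF assms(3), of "cmod z"] z by (intro mult_right_mono mult_left_mono) auto
    also have "\<dots> = K * B * Sg_ratio nu mu g z"
      by (simp add: Sg_ratio_def)
    finally show ?thesis
      by (simp add: deriv_Sg[OF f assms(4) z] norm_mult mult.assoc)
  qed
  then show ?thesis using that by blast
qed

lemma Sg_in_B0:
  assumes "weight nu" "property_U nu" "weight mu" "g holomorphic_on ball 0 1"
    and "to_zero_at_boundary (Sg_ratio nu mu g)" "f \<in> Hinf nu"
  shows "Sg g f \<in> B0 mu"
proof -
  obtain B where f: "f holomorphic_on ball 0 1" and B: "\<forall>z\<in>ball 0 1. nu (cmod z) * cmod (f z) \<le> B"
    using assms(6) by (rule HinfE)
  obtain K where K: "\<And>z. z \<in> ball 0 1 \<Longrightarrow>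
      mu (cmod z) * cmod (deriv (Sg g f) z) \<le> K * B * Sg_ratio nu mu g z"
    using weighted_deriv_Sg_le_ratio[OF assms(1-4)] f B by metis
  have "to_zero_at_boundary (\<lambda>z. mu (cmod z) * cmod (deriv (Sg g f) z))"
  proof (rule to_zero_at_boundary_le[OF to_zero_at_boundary_cmult[OF assms(5), of "K * B"]])
    fix z :: complex assume "z \<in> ball 0 1"
    then show "\<bar>mu (cmod z) * cmod (deriv (Sg g f) z)\<bar> \<le> K * B * Sg_ratio nu mu g z"
      using K weight_nonneg[OF assms(3), of "cmod z"] by simp
  qed
  then show ?thesis unfolding B0_def using holomorphic_on_Sg[OF f assms(4)] by blast
qed

section \<open>Sufficiency\<close>

lemma compact_subset_ball_0_1E:
  assumes "compact K" "K \<subseteq> ball (0::complex) 1"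
  obtains \<rho> where "0 \<le> \<rho>" "\<rho> < 1" "K \<subseteq> cball 0 \<rho>"
proof (cases "K = {}")
  case True
  then show ?thesis using that[of 0] by simp
next
  case False
  obtain x where "x \<in> K" "\<forall>y\<in>K. cmod y \<le> cmod x"
    using continuous_attains_sup[OF assms(1) False continuous_on_norm_id] by blast
  then show ?thesis using that[of "cmod x"] assms(2) by (auto simp: subset_iff)
qed

lemma Hinf_unit_ball_convergent_subseq:
  fixes fs :: "nat \<Rightarrow> complex \<Rightarrow> complex"
  assumes "weight nu" "\<And>r. 0 \<le> r \<Longrightarrow> r < 1 \<Longrightarrow> 0 < nu r"
    and "\<And>n. fs n holomorphic_on ball 0 1" "\<And>n. \<forall>z\<in>ball 0 1. nu (cmod z) * cmod (fs n z) \<le> 1"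
  obtains r f where "strict_mono r" "f holomorphic_on ball 0 1"
    "\<forall>z\<in>ball 0 1. nu (cmod z) * cmod (f z) \<le> 1"
    "\<And>K. compact K \<Longrightarrow> K \<subseteq> ball 0 1 \<Longrightarrow> uniform_limit K (fs \<circ> r) f sequentially"
proof -
  let ?H = "{h. h holomorphic_on ball 0 1 \<and> (\<forall>z\<in>ball 0 1. nu (cmod z) * cmod (h z) \<le> 1)}"
  obtain f r where f: "f holomorphic_on ball 0 1" and r: "strict_mono (r :: nat \<Rightarrow> nat)"
    and lim: "\<And>z. z \<in> ball 0 1 \<Longrightarrow> (\<lambda>n. fs (r n) z) \<longlonglongrightarrow> f z"
    and unif: "\<And>K. compact K \<Longrightarrow> K \<subseteq> ball 0 1 \<Longrightarrow> uniform_limit K (fs \<circ> r) f sequentially"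
  proof (rule Montel[of "ball 0 1" ?H fs])
    fix K :: "complex set" assume "compact K" "K \<subseteq> ball 0 1"
    then obtain \<rho> where \<rho>: "0 \<le> \<rho>" "\<rho> < 1" "K \<subseteq> cball 0 \<rho>"
      by (rule compact_subset_ball_0_1E)
    have "cmod (h z) \<le> 1 / nu \<rho>" if "h \<in> ?H" "z \<in> K" for h z
    proof -
      have z: "z \<in> ball 0 1" "cmod z \<le> \<rho>" using that \<open>K \<subseteq> ball 0 1\<close> \<rho> by auto
      have "nu \<rho> * cmod (h z) \<le> nu (cmod z) * cmod (h z)"
        using weight_antimono[OF assms(1) _ z(2) \<rho>(2)] by (intro mult_right_mono) auto
      also have "\<dots> \<le> 1" using that z by auto
      finally show ?thesis using assms(2)[OF \<rho>(1,2)] by (simp add: field_simps)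
    qed
    then show "\<exists>B. \<forall>h\<in>?H. \<forall>z\<in>K. cmod (h z) \<le> B" by blast
  qed (use assms(3,4) in auto)
  have "nu (cmod z) * cmod (f z) \<le> 1" if "z \<in> ball 0 1" for z
  proof (rule LIMSEQ_le_const2)
    show "(\<lambda>n. nu (cmod z) * cmod (fs (r n) z)) \<longlonglongrightarrow> nu (cmod z) * cmod (f z)"
      by (intro tendsto_intros lim that)
  qed (use assms(4) that in auto)
  then show ?thesis using that r f unif by blast
qed

lemma uniform_limit_deriv_cball:
  fixes D :: "nat \<Rightarrow> complex \<Rightarrow> complex"
  assumes "\<And>n. D n holomorphic_on ball 0 1"
    and "\<And>K. compact K \<Longrightarrow> K \<subseteq> ball 0 1 \<Longrightarrow> uniform_limit K D (\<lambda>_. 0) sequentially"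
    and "r < 1"
  shows "uniform_limit (cball 0 r) (\<lambda>n. deriv (D n)) (\<lambda>_. 0) sequentially"
proof (rule uniform_limitI)
  fix e :: real assume "0 < e"
  define m where "m = max r 0"
  have m: "r \<le> m" "m < 1" using assms(3) by (auto simp: m_def)
  define \<rho> where "\<rho> = (1 - m) / 2"
  have "0 < \<rho>" using m by (simp add: \<rho>_def)
  have sub: "cball z \<rho> \<subseteq> cball 0 (1 - \<rho>)" if "z \<in> cball 0 r" for z :: complex
  proof
    fix w assume "w \<in> cball z \<rho>"
    then have "cmod w \<le> cmod z + \<rho>"
      using norm_triangle_sub[of w z] by (simp add: dist_norm norm_minus_commute)
    moreover have "cmod z \<le> r" using that by simp
    ultimately show "w \<in> cball 0 (1 - \<rho>)" using m unfolding \<rho>_def mem_cball_0 by argo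
  qed
  have "cball 0 (1 - \<rho>) \<subseteq> ball 0 1" using \<open>0 < \<rho>\<close> by auto
  then have "\<forall>\<^sub>F n in sequentially. \<forall>w\<in>cball 0 (1 - \<rho>). dist (D n w) 0 < e * \<rho> / 2"
    using \<open>0 < e\<close> \<open>0 < \<rho>\<close> by (intro uniform_limitD assms(2)) auto
  then show "\<forall>\<^sub>F n in sequentially. \<forall>z\<in>cball 0 r. dist (deriv (D n) z) 0 < e"
  proof (rule eventually_mono)
    fix n assume small: "\<forall>w\<in>cball 0 (1 - \<rho>). dist (D n w) 0 < e * \<rho> / 2"
    have bound: "cmod (deriv (D n) z) \<le> e * \<rho> / 2 / \<rho>" if "z \<in> cball 0 r" for z
    proof (rule norm_deriv_le_circle_bound[OF assms(1)])
      show "cball z \<rho> \<subseteq> ball 0 1" using sub[OF that] \<open>cball 0 (1 - \<rho>) \<subseteq> ball 0 1\<close> by blast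
      show "cmod (D n w) \<le> e * \<rho> / 2" if "dist z w = \<rho>" for w
        using small sub[OF \<open>z \<in> cball 0 r\<close>] that by (force simp: less_imp_le)
    qed (rule \<open>0 < \<rho>\<close>)
    show "\<forall>z\<in>cball 0 r. dist (deriv (D n) z) 0 < e"
    proof
      fix z :: complex assume "z \<in> cball 0 r"
      from bound[OF this] show "dist (deriv (D n) z) 0 < e"
        using \<open>0 < e\<close> \<open>0 < \<rho>\<close> by simp
    qed
  qed
qed

lemma SUP_ball_tendsto_zero:
  fixes F :: "nat \<Rightarrow> complex \<Rightarrow> real"
  assumes "\<And>n z. z \<in> ball 0 1 \<Longrightarrow> 0 \<le> F n z"
    and "to_zero_at_boundary G" "\<And>n z. z \<in> ball 0 1 \<Longrightarrow> F n z \<le> G z"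
    and "\<And>r. r < 1 \<Longrightarrow> uniform_limit (cball 0 r) F (\<lambda>_. 0) sequentially"
  shows "(\<lambda>n. SUP z\<in>ball 0 1. F n z) \<longlonglongrightarrow> 0"
proof (rule tendstoI)
  fix e :: real assume "0 < e"
  then obtain r where "r < 1" and r: "\<And>z. r < cmod z \<and> cmod z < 1 \<Longrightarrow> \<bar>G z\<bar> < e / 2"
    using assms(2) unfolding to_zero_at_boundary_def by (meson half_gt_zero)
  have "\<forall>\<^sub>F n in sequentially. \<forall>z\<in>cball 0 r. dist (F n z) 0 < e / 2"
    using \<open>0 < e\<close> by (intro uniform_limitD assms(4) \<open>r < 1\<close>) auto
  then show "\<forall>\<^sub>F n in sequentially. dist (SUP z\<in>ball 0 1. F n z) 0 < e"
  proof (rule eventually_mono)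
    fix n assume inner: "\<forall>z\<in>cball 0 r. dist (F n z) 0 < e / 2"
    have le: "F n z \<le> e / 2" if "z \<in> ball 0 1" for z
    proof (cases "cmod z \<le> r")
      case True
      then show ?thesis using bspec[OF inner, of z] by (simp add: dist_real_def)
    next
      case False
      then have "\<bar>G z\<bar> < e / 2" using r[of z] that by simp
      then show ?thesis using assms(3)[OF that, of n] by linarith
    qed
    have "F n 0 \<le> (SUP z\<in>ball 0 1. F n z)"
      using le by (intro cSUP_upper bdd_aboveI2[where M = "e / 2"]) auto
    then have "0 \<le> (SUP z\<in>ball 0 1. F n z)"
      using assms(1)[of 0 n] by simp
    moreover have "(SUP z\<in>ball 0 1. F n z) \<le> e / 2"
      using le by (intro cSUP_least) auto
    ultimately show "dist (SUP z\<in>ball 0 1. F n z) 0 < e"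
      using \<open>0 < e\<close> by (simp add: dist_real_def)
  qed
qed

lemma uniform_limit_weighted_deriv_Sg:
  fixes D :: "nat \<Rightarrow> complex \<Rightarrow> complex"
  assumes "weight mu" "g holomorphic_on ball 0 1"
    and hol: "\<And>n. D n holomorphic_on ball 0 1"
    and unif: "\<And>K. compact K \<Longrightarrow> K \<subseteq> ball 0 1 \<Longrightarrow> uniform_limit K D (\<lambda>_. 0) sequentially"
    and "r < 1"
  shows "uniform_limit (cball 0 r)
    (\<lambda>n z. mu (cmod z) * cmod (deriv (Sg g (D n)) z)) (\<lambda>_. 0) sequentially"
proof -
  define m where "m = max r 0"
  have cont: "continuous_on (ball 0 1) (\<lambda>z. mu (cmod z) * cmod (g z))"
    by (rule continuous_on_weighted_norm[OF assms(1,2)])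
  have "cball 0 m \<subseteq> ball 0 1" using assms(5) by (auto simp: m_def)
  then have "compact ((\<lambda>z. mu (cmod z) * cmod (g z)) ` cball 0 m)"
    by (intro compact_continuous_image continuous_on_subset[OF cont]) auto
  then obtain M where M: "\<forall>x\<in>(\<lambda>z. mu (cmod z) * cmod (g z)) ` cball 0 m. \<bar>x\<bar> \<le> M"
    using compact_imp_bounded bounded_real by blast
  have "uniform_limit (cball 0 r) (\<lambda>n. deriv (D n)) (\<lambda>_. 0) sequentially"
    by (rule uniform_limit_deriv_cball[OF hol unif assms(5)])
  then have "uniform_limit (cball 0 r) (\<lambda>n z. M * cmod (deriv (D n) z)) (\<lambda>_. M * cmod 0) sequentially"
    by (rule bounded_linear.uniform_limit[OF bounded_linear_mult_right uniform_limit_norm])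
  then have ulim: "uniform_limit (cball 0 r) (\<lambda>n z. M * cmod (deriv (D n) z)) (\<lambda>_. 0) sequentially"
    by simp
  have le: "\<forall>n. \<forall>z\<in>cball 0 r.
      norm (mu (cmod z) * cmod (deriv (Sg g (D n)) z)) \<le> M * cmod (deriv (D n) z)"
  proof (intro allI ballI)
    fix n and z :: complex assume "z \<in> cball 0 r"
    then have "z \<in> cball 0 m" "z \<in> ball 0 1" using assms(5) by (auto simp: m_def)
    then have "\<bar>mu (cmod z) * cmod (g z)\<bar> \<le> M" using M by blast
    then have "mu (cmod z) * cmod (g z) \<le> M" by linarith
    have "norm (mu (cmod z) * cmod (deriv (Sg g (D n)) z)) =
        mu (cmod z) * cmod (g z) * cmod (deriv (D n) z)"
      using \<open>z \<in> ball 0 1\<close> weight_nonneg[OF assms(1), of "cmod z"]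
      by (simp add: deriv_Sg[OF hol assms(2)] norm_mult mult_ac)
    also have "\<dots> \<le> M * cmod (deriv (D n) z)"
      using \<open>mu (cmod z) * cmod (g z) \<le> M\<close> by (rule mult_right_mono) simp
    finally show "norm (mu (cmod z) * cmod (deriv (Sg g (D n)) z)) \<le> M * cmod (deriv (D n) z)" .
  qed
  show ?thesis
    by (rule uniform_limit_null_comparison[OF always_eventually[OF le] ulim])
qed

lemma SUP_weighted_deriv_Sg_tendsto_zero:
  fixes D :: "nat \<Rightarrow> complex \<Rightarrow> complex"
  assumes "weight nu" "property_U nu" "weight mu" "g holomorphic_on ball 0 1"
    and "to_zero_at_boundary (Sg_ratio nu mu g)"
    and hol: "\<And>n. D n holomorphic_on ball 0 1"
    and bound: "\<And>n. \<forall>z\<in>ball 0 1. nu (cmod z) * cmod (D n z) \<le> B"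
    and unif: "\<And>K. compact K \<Longrightarrow> K \<subseteq> ball 0 1 \<Longrightarrow> uniform_limit K D (\<lambda>_. 0) sequentially"
  shows "(\<lambda>n. SUP z\<in>ball 0 1. mu (cmod z) * cmod (deriv (Sg g (D n)) z)) \<longlonglongrightarrow> 0"
proof -
  obtain K where K: "\<And>f B z. f holomorphic_on ball 0 1 \<Longrightarrow>
      \<forall>w\<in>ball 0 1. nu (cmod w) * cmod (f w) \<le> B \<Longrightarrow> z \<in> ball 0 1 \<Longrightarrow>
      mu (cmod z) * cmod (deriv (Sg g f) z) \<le> K * B * Sg_ratio nu mu g z"
    using weighted_deriv_Sg_le_ratio[OF assms(1-4)] by blast
  show ?thesis
  proof (rule SUP_ball_tendsto_zero)
    show "to_zero_at_boundary (\<lambda>z. K * B * Sg_ratio nu mu g z)"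
      by (rule to_zero_at_boundary_cmult[OF assms(5)])
    show "mu (cmod z) * cmod (deriv (Sg g (D n)) z) \<le> K * B * Sg_ratio nu mu g z"
      if "z \<in> ball 0 1" for n z
      using K[OF hol bound that] .
    show "0 \<le> mu (cmod z) * cmod (deriv (Sg g (D n)) z)" if "z \<in> ball 0 1" for n z
      using weight_nonneg[OF assms(3), of "cmod z"] that by simp
  qed (rule uniform_limit_weighted_deriv_Sg[OF assms(3,4) hol unif])
qed

lemma Bnorm_fsub_Sg_tendsto_zero:
  fixes F :: "nat \<Rightarrow> complex \<Rightarrow> complex"
  assumes "weight nu" "property_U nu" "weight mu" "g holomorphic_on ball 0 1"
    and "to_zero_at_boundary (Sg_ratio nu mu g)"
    and hol: "\<And>n. F n holomorphic_on ball 0 1" "f holomorphic_on ball 0 1"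
    and bound: "\<And>n. \<forall>z\<in>ball 0 1. nu (cmod z) * cmod (F n z) \<le> 1"
      "\<forall>z\<in>ball 0 1. nu (cmod z) * cmod (f z) \<le> 1"
    and unif: "\<And>K. compact K \<Longrightarrow> K \<subseteq> ball 0 1 \<Longrightarrow> uniform_limit K F f sequentially"
  shows "(\<lambda>n. Bnorm mu (fsub (Sg g (F n)) (Sg g f))) \<longlonglongrightarrow> 0"
proof -
  define D where "D = (\<lambda>n z. F n z - f z)"
  have "(\<lambda>n. SUP z\<in>ball 0 1. mu (cmod z) * cmod (deriv (Sg g (D n)) z)) \<longlonglongrightarrow> 0"
  proof (rule SUP_weighted_deriv_Sg_tendsto_zero[OF assms(1-5)])
    show "D n holomorphic_on ball 0 1" for n
      unfolding D_def using hol by (intro holomorphic_intros)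
    show "\<forall>z\<in>ball 0 1. nu (cmod z) * cmod (D n z) \<le> 2" for n
    proof
      fix z :: complex assume z: "z \<in> ball 0 1"
      have "nu (cmod z) * cmod (D n z) \<le> nu (cmod z) * cmod (F n z) + nu (cmod z) * cmod (f z)"
        unfolding D_def distrib_left[symmetric] using weight_nonneg[OF assms(1), of "cmod z"] z
        by (intro mult_left_mono norm_triangle_ineq4) auto
      also have "\<dots> \<le> 2" using add_mono[OF bspec[OF bound(1) z] bspec[OF bound(2) z]] by simp
      finally show "nu (cmod z) * cmod (D n z) \<le> 2" .
    qed
    show "uniform_limit K D (\<lambda>_. 0) sequentially" if "compact K" "K \<subseteq> ball 0 1" for K
      using uniform_limit_minus[OF unif[OF that] uniform_limit_const[where c = f]]
      unfolding D_def by simp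
  qed
  then show ?thesis
    unfolding D_def by (simp add: Bnorm_fsub_Sg[OF hol assms(4)])
qed

lemma compact_op_Sg_if_to_zero_at_boundary:
  assumes "weight nu" "property_U nu" "weight mu" "g holomorphic_on ball 0 1"
    and "to_zero_at_boundary (Sg_ratio nu mu g)" "X \<subseteq> Hinf nu" "B0 mu \<subseteq> Y"
  shows "compact_op (Sg g) X (Hnorm nu) Y (Bnorm mu) fsub"
  unfolding compact_op_def
proof (intro conjI ballI allI impI)
  fix f assume "f \<in> X"
  then have "Sg g f \<in> B0 mu" using assms(6) by (intro Sg_in_B0[OF assms(1-5)]) blast
  then show "Sg g f \<in> Y" using assms(7) by blast
next
  fix fs :: "nat \<Rightarrow> complex \<Rightarrow> complex"
  assume fs: "\<forall>n. fs n \<in> X \<and> Hnorm nu (fs n) \<le> 1"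
  then have Hinf: "fs n \<in> Hinf nu" for n using assms(6) by blast
  then have hol: "fs n holomorphic_on ball 0 1" for n unfolding Hinf_def by simp
  have bound: "\<forall>z\<in>ball 0 1. nu (cmod z) * cmod (fs n z) \<le> 1" for n
    using Hnorm_upper[OF Hinf] conjunct2[OF spec[OF fs, of n]] by (meson order_trans)
  obtain r f where r: "strict_mono r" and f: "f holomorphic_on ball 0 1"
    and fb: "\<forall>z\<in>ball 0 1. nu (cmod z) * cmod (f z) \<le> 1"
    and unif: "\<And>K. compact K \<Longrightarrow> K \<subseteq> ball 0 1 \<Longrightarrow> uniform_limit K (fs \<circ> r) f sequentially"
    using Hinf_unit_ball_convergent_subseq[where fs = fs, OF assms(1) property_U_pos[OF assms(2)] hol bound]
    by blast
  have "(\<lambda>n. Bnorm mu (fsub (Sg g (fs (r n))) (Sg g f))) \<longlonglongrightarrow> 0"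
    using unif by (intro Bnorm_fsub_Sg_tendsto_zero[OF assms(1-5) hol f bound fb]) (simp add: o_def)
  moreover have "Sg g f \<in> Y"
    using Sg_in_B0[OF assms(1-5) HinfI[OF f fb]] assms(7) by blast
  ultimately show "\<exists>r h. strict_mono r \<and> h \<in> Y \<and> (\<lambda>n. Bnorm mu (fsub (Sg g (fs (r n))) h)) \<longlonglongrightarrow> 0"
    using r by (intro exI conjI)
qed

section \<open>Test functions\<close>

definition test_coeff :: "(real \<Rightarrow> real) \<Rightarrow> nat \<Rightarrow> real \<Rightarrow> complex \<Rightarrow> real" where
  "test_coeff nu N M a = (1 - (cmod a)\<^sup>2) ^ N / (M * nu (cmod a))"

definition test_fn :: "(real \<Rightarrow> real) \<Rightarrow> nat \<Rightarrow> real \<Rightarrow> complex \<Rightarrow> complex \<Rightarrow> complex" where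
  "test_fn nu N M a z = of_real (test_coeff nu N M a) / (1 - cnj a * z) ^ N"

lemma test_coeff_pos: "cmod a < 1 \<Longrightarrow> 0 < M \<Longrightarrow> 0 < nu (cmod a) \<Longrightarrow> 0 < test_coeff nu N M a"
  by (simp add: test_coeff_def abs_square_less_1)

lemma norm_one_minus_cnj_mult_ge: "1 - cmod a * cmod z \<le> cmod (1 - cnj a * z)"
  using norm_triangle_ineq2[of 1 "cnj a * z"] by (simp add: norm_mult)

lemma one_minus_square_le:
  fixes s t :: real
  assumes "0 \<le> s" "t \<le> 1"
  shows "1 - s\<^sup>2 \<le> 2 * (1 - s * t)"
proof -
  have "s * t \<le> s" using assms by (simp add: mult_left_le)
  moreover have "0 \<le> (1 - s)\<^sup>2" by simp
  ultimately show ?thesis by (simp add: power2_eq_square algebra_simps)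
qed

lemma one_minus_norm_mult_pos: "cmod a < 1 \<Longrightarrow> cmod z < 1 \<Longrightarrow> 0 < 1 - cmod a * cmod z"
  using mult_strict_mono[of "cmod a" 1 "cmod z" 1] by simp

lemma one_minus_cnj_mult_nonzero: "cmod a < 1 \<Longrightarrow> cmod z < 1 \<Longrightarrow> 1 - cnj a * z \<noteq> 0"
  using one_minus_norm_mult_pos norm_one_minus_cnj_mult_ge[of a z] by fastforce

lemma has_field_derivative_const_div_power:
  fixes b c z :: complex
  assumes w: "1 - b * z \<noteq> 0"
  shows "((\<lambda>z. c / (1 - b * z) ^ N) has_field_derivative c * of_nat N * b / (1 - b * z) ^ Suc N) (at z)"
proof -
  \<comment> \<open>the derivative in the form produced by \<open>derivative_eq_intros\<close>\<close>
  have key: "c * (of_nat N * (b * (1 - b * z) ^ (N - Suc 0))) / ((1 - b * z) ^ N * (1 - b * z) ^ N) =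
      c * of_nat N * b / ((1 - b * z) * (1 - b * z) ^ N)"
  proof (cases N)
    case (Suc m)
    then have "(1 - b * z) ^ N * (1 - b * z) ^ N = (1 - b * z) ^ m * ((1 - b * z) * (1 - b * z) ^ N)"
      by (simp add: mult_ac)
    then show ?thesis using w Suc by (simp add: mult_ac)
  qed simp
  have "b * z \<noteq> 1" using w by auto
  show ?thesis
    apply (rule derivative_eq_intros refl | simp add: w \<open>b * z \<noteq> 1\<close>)+
    by (rule key)
qed

lemma deriv_test_fn:
  assumes "cmod a < 1" "cmod z < 1"
  shows "deriv (test_fn nu N M a) z =
    of_real (test_coeff nu N M a) * of_nat N * cnj a / (1 - cnj a * z) ^ Suc N"
  unfolding test_fn_def [abs_def]
  using one_minus_cnj_mult_nonzero[OF assms]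
  by (intro DERIV_imp_deriv has_field_derivative_const_div_power)

lemma holomorphic_on_test_fn:
  assumes "cmod a < 1"
  shows "test_fn nu N M a holomorphic_on ball 0 1"
proof -
  have "\<exists>f'. (test_fn nu N M a has_field_derivative f') (at z)" if "z \<in> ball 0 1" for z
    unfolding test_fn_def [abs_def]
    by (rule exI, rule has_field_derivative_const_div_power, rule one_minus_cnj_mult_nonzero)
       (use assms that in auto)
  then show ?thesis unfolding holomorphic_on_open[OF open_ball] by blast
qed

lemma norm_test_fn:
  "cmod (test_fn nu N M a z) = \<bar>test_coeff nu N M a\<bar> / cmod (1 - cnj a * z) ^ N"
  by (simp add: test_fn_def norm_divide norm_power)

lemma norm_deriv_test_fn:
  assumes "cmod a < 1" "cmod z < 1"
  shows "cmod (deriv (test_fn nu N M a) z) =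
    \<bar>test_coeff nu N M a\<bar> * N * cmod a / cmod (1 - cnj a * z) ^ Suc N"
  by (simp add: deriv_test_fn[OF assms] norm_divide norm_power norm_mult)

lemma norm_deriv_test_fn_center:
  assumes "cmod a < 1" "0 < M" "0 < nu (cmod a)"
  shows "cmod (deriv (test_fn nu N M a) a) = N / M * cmod a / ((1 - (cmod a)\<^sup>2) * nu (cmod a))"
proof -
  have A: "0 < 1 - (cmod a)\<^sup>2" using assms(1) by (simp add: abs_square_less_1)
  have "1 - cnj a * a = of_real (1 - (cmod a)\<^sup>2)"
    by (simp only: mult.commute[of "cnj a"] complex_norm_square[symmetric] of_real_diff of_real_1)
  then have "cmod (1 - cnj a * a) = 1 - (cmod a)\<^sup>2"
    using A by (simp only: norm_of_real abs_of_pos)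
  then have "cmod (deriv (test_fn nu N M a) a) =
      test_coeff nu N M a * N * cmod a / (1 - (cmod a)\<^sup>2) ^ Suc N"
    unfolding norm_deriv_test_fn[OF assms(1) assms(1)] abs_of_pos[OF test_coeff_pos[of a M nu N, OF assms]]
    by (rule arg_cong)
  also have "\<dots> = N / M * cmod a / ((1 - (cmod a)\<^sup>2) * nu (cmod a))"
    using assms A by (simp add: test_coeff_def field_simps)
  finally show ?thesis .
qed

lemma bounded_test_fn:
  assumes "cmod a < 1"
  shows "bounded (test_fn nu N M a ` ball 0 1)"
proof -
  have "cmod (test_fn nu N M a z) \<le> \<bar>test_coeff nu N M a\<bar> / (1 - cmod a) ^ N"
    if "z \<in> ball 0 1" for z
  proof -
    have "1 - cmod a \<le> cmod (1 - cnj a * z)"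
      using norm_one_minus_cnj_mult_ge[of a z] that mult_left_le[of "cmod z" "cmod a"] by simp
    then have le: "(1 - cmod a) ^ N \<le> cmod (1 - cnj a * z) ^ N"
      using assms by (intro power_mono) auto
    have pos: "0 < (1 - cmod a) ^ N" using assms by simp
    show ?thesis
      unfolding norm_test_fn using le pos order_less_le_trans[OF pos le]
      by (intro divide_left_mono mult_pos_pos) auto
  qed
  then show ?thesis
    unfolding bounded_iff by (intro exI[of _ "\<bar>test_coeff nu N M a\<bar> / (1 - cmod a) ^ N"]) auto
qed

lemma weight_mult_power_le:
  assumes w: "weight nu" and U: "almost_increasing_quotient nu \<alpha> C"
    and "0 < \<alpha>" "\<alpha> \<le> real N" "1 \<le> C" and a: "cmod a < 1" and z: "cmod z < 1"
  shows "nu (cmod z) * (1 - (cmod a)\<^sup>2) ^ N \<le> C * nu (cmod a) * (2 * (1 - cmod a * cmod z)) ^ N"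
proof -
  define A where "A = 1 - (cmod a)\<^sup>2"
  define d where "d = 2 * (1 - cmod a * cmod z)"
  have "0 < A" using a by (simp add: A_def abs_square_less_1)
  have "0 < d" using one_minus_norm_mult_pos[OF a z] by (simp add: d_def)
  have "A \<le> d" using one_minus_square_le[of "cmod a" "cmod z"] z by (simp add: A_def d_def)
  have nu: "0 \<le> nu (cmod z)" "0 \<le> nu (cmod a)"
    using weight_nonneg[OF w] a z by auto
  show ?thesis
  proof (cases "cmod z \<le> cmod a")
    case True
    have "0 < 1 - (cmod z)\<^sup>2" using z by (simp add: abs_square_less_1)
    have "1 - (cmod z)\<^sup>2 \<le> d"
      using one_minus_square_le[of "cmod z" "cmod a"] a by (simp add: d_def mult.commute)
    have "nu (cmod z) * A ^ N = nu (cmod z) * A powr \<alpha> * A powr (N - \<alpha>)"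
      using \<open>0 < A\<close> by (simp add: powr_realpow[symmetric] powr_add[symmetric])
    also have "\<dots> \<le> C * nu (cmod a) * (1 - (cmod z)\<^sup>2) powr \<alpha> * A powr (N - \<alpha>)"
      using U True a unfolding almost_increasing_quotient_def A_def
      by (intro mult_right_mono) auto
    also have "\<dots> \<le> C * nu (cmod a) * d powr \<alpha> * d powr (N - \<alpha>)"
      using \<open>0 < 1 - (cmod z)\<^sup>2\<close> \<open>1 - (cmod z)\<^sup>2 \<le> d\<close> \<open>0 < A\<close> \<open>A \<le> d\<close> assms(3-5) nu
      by (intro mult_mono mult_left_mono powr_mono2) auto
    also have "\<dots> = C * nu (cmod a) * d ^ N"
      using \<open>0 < d\<close> by (simp add: powr_realpow[symmetric] powr_add[symmetric] mult.assoc)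
    finally show ?thesis by (simp add: A_def d_def)
  next
    case False
    then have "nu (cmod z) \<le> nu (cmod a)" using weight_antimono[OF w] z by simp
    then have "nu (cmod z) * A ^ N \<le> nu (cmod a) * d ^ N"
      using \<open>0 < A\<close> \<open>A \<le> d\<close> nu by (intro mult_mono power_mono) auto
    also have "\<dots> \<le> C * nu (cmod a) * d ^ N"
      using mult_right_mono[OF \<open>1 \<le> C\<close>, of "nu (cmod a) * d ^ N"] \<open>0 < d\<close> nu
      by (simp add: mult.assoc)
    finally show ?thesis by (simp add: A_def d_def)
  qed
qed

lemma weighted_norm_test_fn_le_1:
  assumes w: "weight nu" and U: "almost_increasing_quotient nu \<alpha> C"
    and "0 < \<alpha>" "\<alpha> \<le> real N" "1 \<le> C" and pos: "\<And>r. 0 \<le> r \<Longrightarrow> r < 1 \<Longrightarrow> 0 < nu r"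
    and a: "cmod a < 1" and z: "cmod z < 1"
  shows "nu (cmod z) * cmod (test_fn nu N (2 ^ N * C) a z) \<le> 1"
proof -
  define A where "A = 1 - (cmod a)\<^sup>2"
  define d where "d = 1 - cmod a * cmod z"
  have "0 < d" using one_minus_norm_mult_pos[OF a z] by (simp add: d_def)
  have nua: "0 < nu (cmod a)" using pos a by simp
  have coeff: "0 < test_coeff nu N (2 ^ N * C) a"
    using test_coeff_pos[of a "2 ^ N * C" nu N] a nua \<open>1 \<le> C\<close> by simp
  have "nu (cmod z) * cmod (test_fn nu N (2 ^ N * C) a z) \<le>
      nu (cmod z) * (test_coeff nu N (2 ^ N * C) a / d ^ N)"
  proof -
    have "d \<le> cmod (1 - cnj a * z)" using norm_one_minus_cnj_mult_ge[of a z] by (simp add: d_def)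
    then show ?thesis
      unfolding norm_test_fn abs_of_pos[OF coeff]
      using \<open>0 < d\<close> coeff weight_nonneg[OF w] z
      by (intro mult_left_mono divide_left_mono power_mono mult_pos_pos zero_less_power) auto
  qed
  also have "\<dots> = nu (cmod z) * A ^ N / (C * nu (cmod a) * (2 * d) ^ N)"
    by (simp add: test_coeff_def A_def power_mult_distrib field_simps)
  also have "\<dots> \<le> 1"
    using weight_mult_power_le[OF w U assms(3-5) a z] \<open>0 < d\<close> nua \<open>1 \<le> C\<close>
    by (simp add: A_def d_def)
  finally show ?thesis .
qed

lemma norm_deriv_test_fn_le:
  assumes U: "almost_increasing_quotient nu \<alpha> C" and "\<alpha> \<le> real N" "1 \<le> C" "0 < M"
    and pos: "\<And>r. 0 \<le> r \<Longrightarrow> r < 1 \<Longrightarrow> 0 < nu r" and a: "cmod a < 1" and z: "cmod z < 1"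
  shows "cmod (deriv (test_fn nu N M a) z) \<le>
    C * N / (M * nu 0 * (1 - cmod z) ^ Suc N) * (1 - (cmod a)\<^sup>2) powr (N - \<alpha>)"
proof -
  define A where "A = 1 - (cmod a)\<^sup>2"
  have "0 < A" using a by (simp add: A_def abs_square_less_1)
  have nu: "0 < nu 0" "0 < nu (cmod a)" using pos a by auto
  have coeff: "0 < test_coeff nu N M a" using test_coeff_pos[of a M nu N] a nu \<open>0 < M\<close> by simp
  have "nu 0 * A powr \<alpha> \<le> C * nu (cmod a)"
    using U a unfolding almost_increasing_quotient_def A_def by (auto dest: spec[of _ 0])
  then have "test_coeff nu N M a \<le> C / (M * nu 0) * A powr (N - \<alpha>)"
    using \<open>0 < A\<close> nu \<open>0 < M\<close>
    by (simp add: test_coeff_def A_def powr_realpow[symmetric] powr_diff field_simps)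
  moreover have "(1 - cmod z) ^ Suc N \<le> cmod (1 - cnj a * z) ^ Suc N"
    using norm_one_minus_cnj_mult_ge[of a z] mult_left_le_one_le[of "cmod z" "cmod a"] a z
    by (intro power_mono) auto
  ultimately have "test_coeff nu N M a * N * cmod a / cmod (1 - cnj a * z) ^ Suc N \<le>
      C / (M * nu 0) * A powr (N - \<alpha>) * N * 1 / (1 - cmod z) ^ Suc N"
    using coeff a z nu \<open>1 \<le> C\<close> \<open>0 < M\<close> by (intro frac_le mult_mono mult_nonneg_nonneg) auto
  then show ?thesis
    unfolding norm_deriv_test_fn[OF a z] abs_of_pos[OF coeff] by (simp add: A_def field_simps)
qed

lemma deriv_test_fn_tendsto_zero:
  assumes U: "almost_increasing_quotient nu \<alpha> C" and "\<alpha> < real N" "1 \<le> C" "0 < M"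
    and pos: "\<And>r. 0 \<le> r \<Longrightarrow> r < 1 \<Longrightarrow> 0 < nu r"
    and a: "\<And>n. cmod (a n) < 1" "(\<lambda>n. cmod (a n)) \<longlonglongrightarrow> 1" and z: "cmod z < 1"
  shows "(\<lambda>n. deriv (test_fn nu N M (a n)) z) \<longlonglongrightarrow> 0"
proof (rule Lim_null_comparison)
  let ?K = "C * N / (M * nu 0 * (1 - cmod z) ^ Suc N)"
  show "\<forall>\<^sub>F n in sequentially. norm (deriv (test_fn nu N M (a n)) z) \<le>
      ?K * (1 - (cmod (a n))\<^sup>2) powr (N - \<alpha>)"
    using norm_deriv_test_fn_le[OF U _ \<open>1 \<le> C\<close> \<open>0 < M\<close> pos a(1) z] \<open>\<alpha> < real N\<close> by simp
  have "(\<lambda>n. 1 - (cmod (a n))\<^sup>2) \<longlonglongrightarrow> 1 - 1\<^sup>2"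
    by (intro tendsto_intros a(2))
  then have "(\<lambda>n. (1 - (cmod (a n))\<^sup>2) powr (N - \<alpha>)) \<longlonglongrightarrow> 0"
    using a(1) \<open>\<alpha> < real N\<close>
    by (intro tendsto_zero_powrI) (auto simp: abs_square_le_1 less_imp_le)
  then show "(\<lambda>n. ?K * (1 - (cmod (a n))\<^sup>2) powr (N - \<alpha>)) \<longlonglongrightarrow> 0"
    by (rule tendsto_mult_right_zero)
qed

lemma weighted_deriv_test_fn_center_ge:
  assumes "weight nu" "weight mu" "cmod a < 1" "0 < M" "0 < nu (cmod a)"
    and "\<epsilon> \<le> \<bar>Sg_ratio nu mu g a\<bar>"
  shows "N / M * cmod a * \<epsilon> \<le> mu (cmod a) * cmod (deriv (test_fn nu N M a) a * g a)"
proof -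
  have "\<epsilon> \<le> Sg_ratio nu mu g a"
    using assms(6) Sg_ratio_nonneg[OF assms(1,2), of a g] assms(3) by simp
  then have "N / M * cmod a * \<epsilon> \<le> N / M * cmod a * Sg_ratio nu mu g a"
    using assms(4) by (intro mult_left_mono) auto
  moreover have "mu (cmod a) * cmod (deriv (test_fn nu N M a) a * g a) = N / M * cmod a * Sg_ratio nu mu g a"
    by (simp add: norm_mult norm_deriv_test_fn_center[of a M nu N, OF assms(3-5)] Sg_ratio_def)
  ultimately show ?thesis by linarith
qed

lemma property_U_test_fnE:
  assumes "weight nu" "property_U nu"
  obtains N M where "0 < N" "0 < M"
    "\<And>a z. cmod a < 1 \<Longrightarrow> cmod z < 1 \<Longrightarrow> nu (cmod z) * cmod (test_fn nu N M a z) \<le> 1"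
    "\<And>a z. (\<And>n. cmod (a n) < 1) \<Longrightarrow> (\<lambda>n. cmod (a n)) \<longlonglongrightarrow> 1 \<Longrightarrow> cmod z < 1 \<Longrightarrow>
       (\<lambda>n. deriv (test_fn nu N M (a n)) z) \<longlonglongrightarrow> 0"
proof -
  obtain \<alpha> C where "0 < \<alpha>" "1 \<le> C" and U: "almost_increasing_quotient nu \<alpha> C"
    using property_UE[OF assms(2)] by blast
  define N where "N = nat \<lfloor>\<alpha>\<rfloor> + 1"
  have "\<alpha> < real N" unfolding N_def using \<open>0 < \<alpha>\<close> by linarith
  have pos: "\<And>r. 0 \<le> r \<Longrightarrow> r < 1 \<Longrightarrow> 0 < nu r" using property_U_pos[OF assms(2)] .
  show ?thesis
  proof (rule that[of N "2 ^ N * C"])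
    show "0 < N" "0 < 2 ^ N * C" using \<open>1 \<le> C\<close> by (auto simp: N_def)
    show "nu (cmod z) * cmod (test_fn nu N (2 ^ N * C) a z) \<le> 1"
      if "cmod a < 1" "cmod z < 1" for a z
      using weighted_norm_test_fn_le_1[OF assms(1) U \<open>0 < \<alpha>\<close> _ \<open>1 \<le> C\<close> pos that]
        \<open>\<alpha> < real N\<close> by simp
    show "(\<lambda>n. deriv (test_fn nu N (2 ^ N * C) (a n)) z) \<longlonglongrightarrow> 0"
      if "\<And>n. cmod (a n) < 1" "(\<lambda>n. cmod (a n)) \<longlonglongrightarrow> 1" "cmod z < 1" for a z
      using \<open>1 \<le> C\<close> by (intro deriv_test_fn_tendsto_zero[OF U \<open>\<alpha> < real N\<close> \<open>1 \<le> C\<close> _ pos that]) simp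
  qed
qed

section \<open>Necessity\<close>

lemma weighted_deriv_tendsto_zero_if_Bnorm_tendsto_zero:
  assumes "weight mu" and g: "g holomorphic_on ball 0 1"
    and T: "\<And>n. T n holomorphic_on ball 0 1" "\<And>n. Sg g (T n) \<in> Binf mu" and h: "h \<in> Binf mu"
    and lim: "(\<lambda>n. Bnorm mu (fsub (Sg g (T n)) h)) \<longlonglongrightarrow> 0"
    and pointwise: "\<And>z. z \<in> ball 0 1 \<Longrightarrow> (\<lambda>n. deriv (T n) z) \<longlonglongrightarrow> 0"
    and b: "\<And>n. b n \<in> ball 0 1"
  shows "(\<lambda>n. mu (cmod (b n)) * cmod (deriv (T n) (b n) * g (b n))) \<longlonglongrightarrow> 0"
proof -
  define E where "E n = Bnorm mu (fsub (Sg g (T n)) h)" for n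
  have "h holomorphic_on ball 0 1" using h unfolding Binf_def by blast
  have E: "mu (cmod z) * cmod (deriv (T n) z * g z - deriv h z) \<le> E n" if "z \<in> ball 0 1" for n z
    using Bnorm_upper[OF Binf_fsub[OF assms(1) T(2) h] that]
    by (simp add: E_def deriv_fsub[OF holomorphic_on_Sg[OF T(1) g] \<open>h holomorphic_on ball 0 1\<close> that]
        deriv_Sg[OF T(1) g that])
  have h0: "mu (cmod z) * cmod (deriv h z) = 0" if "z \<in> ball 0 1" for z
  proof -
    have "(\<lambda>n. mu (cmod z) * cmod (deriv (T n) z * g z - deriv h z)) \<longlonglongrightarrow>
        mu (cmod z) * cmod (0 * g z - deriv h z)"
      by (intro tendsto_intros pointwise that)
    then have "mu (cmod z) * cmod (deriv h z) \<le> 0"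
      using tendsto_le[OF sequentially_bot lim[folded E_def]] E[OF that] by simp
    moreover have "0 \<le> mu (cmod z) * cmod (deriv h z)" using weight_nonneg[OF assms(1)] that by simp
    ultimately show ?thesis by linarith
  qed
  have "mu (cmod (b n)) * cmod (deriv (T n) (b n) * g (b n)) \<le> E n" for n
  proof -
    have "mu (cmod (b n)) * cmod (deriv (T n) (b n) * g (b n)) \<le>
        mu (cmod (b n)) * cmod (deriv (T n) (b n) * g (b n) - deriv h (b n)) +
        mu (cmod (b n)) * cmod (deriv h (b n))"
      unfolding distrib_left[symmetric] using weight_nonneg[OF assms(1)] b[of n]
      by (intro mult_left_mono) (auto simp: norm_triangle_sub add.commute)
    then show ?thesis using E[OF b, of n n] h0[OF b, of n] by linarith
  qed
  then show ?thesis
    using weight_nonneg[OF assms(1)] b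
    by (intro tendsto_sandwich[OF always_eventually always_eventually tendsto_const lim[folded E_def]])
       auto
qed

lemma compact_op_Sg_weighted_deriv_subseq:
  assumes "weight mu" "g holomorphic_on ball 0 1"
    and compact: "compact_op (Sg g) X (Hnorm nu) Y (Bnorm mu) fsub" and Y: "Y \<subseteq> Binf mu"
    and T: "\<And>n. T n holomorphic_on ball 0 1" "\<And>n. T n \<in> X \<and> Hnorm nu (T n) \<le> 1"
    and pointwise: "\<And>z. z \<in> ball 0 1 \<Longrightarrow> (\<lambda>n. deriv (T n) z) \<longlonglongrightarrow> 0"
    and b: "\<And>n. b n \<in> ball 0 1"
  obtains r where "strict_mono r"
    "(\<lambda>n. mu (cmod (b (r n))) * cmod (deriv (T (r n)) (b (r n)) * g (b (r n)))) \<longlonglongrightarrow> 0"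
proof -
  have SgY: "Sg g (T n) \<in> Binf mu" for n using compact T(2) Y unfolding compact_op_def by blast
  obtain r h where r: "strict_mono r" and "h \<in> Y"
    and lim: "(\<lambda>n. Bnorm mu (fsub (Sg g (T (r n))) h)) \<longlonglongrightarrow> 0"
    using compact T(2) unfolding compact_op_def by meson
  have "(\<lambda>n. mu (cmod (b (r n))) * cmod (deriv (T (r n)) (b (r n)) * g (b (r n)))) \<longlonglongrightarrow> 0"
  proof (rule weighted_deriv_tendsto_zero_if_Bnorm_tendsto_zero[OF assms(1,2) T(1) SgY _ lim])
    show "h \<in> Binf mu" using \<open>h \<in> Y\<close> Y by blast
    show "(\<lambda>n. deriv (T (r n)) z) \<longlonglongrightarrow> 0" if "z \<in> ball 0 1" for z
      using LIMSEQ_subseq_LIMSEQ[OF pointwise[OF that] r] by (simp add: o_def)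
  qed (rule b)
  then show ?thesis using that r by blast
qed

lemma to_zero_at_boundary_if_compact_op_Sg:
  assumes w: "weight nu" and U: "property_U nu" and mu: "weight mu" and g: "g holomorphic_on ball 0 1"
    and compact: "compact_op (Sg g) X (Hnorm nu) Y (Bnorm mu) fsub"
    and X: "\<And>f. f holomorphic_on ball 0 1 \<Longrightarrow> \<forall>z\<in>ball 0 1. nu (cmod z) * cmod (f z) \<le> 1 \<Longrightarrow>
      bounded (f ` ball 0 1) \<Longrightarrow> f \<in> X"
    and Y: "Y \<subseteq> Binf mu"
  shows "to_zero_at_boundary (Sg_ratio nu mu g)"
proof (rule ccontr)
  assume "\<not> to_zero_at_boundary (Sg_ratio nu mu g)"
  then obtain \<epsilon> a where "0 < \<epsilon>" and a: "\<And>n. cmod (a n) < 1" "(\<lambda>n. cmod (a n)) \<longlonglongrightarrow> 1"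
    and ratio: "\<And>n. \<epsilon> \<le> \<bar>Sg_ratio nu mu g (a n)\<bar>"
    by (rule not_to_zero_at_boundaryE) blast
  obtain N M where "0 < N" "0 < M"
    and unit: "\<And>a z. cmod a < 1 \<Longrightarrow> cmod z < 1 \<Longrightarrow> nu (cmod z) * cmod (test_fn nu N M a z) \<le> 1"
    and decay: "\<And>a z. (\<And>n. cmod (a n) < 1) \<Longrightarrow> (\<lambda>n. cmod (a n)) \<longlonglongrightarrow> 1 \<Longrightarrow> cmod z < 1 \<Longrightarrow>
       (\<lambda>n. deriv (test_fn nu N M (a n)) z) \<longlonglongrightarrow> 0"
    using property_U_test_fnE[OF w U] by blast
  define T where "T n = test_fn nu N M (a n)" for n
  have hol: "T n holomorphic_on ball 0 1" for n
    unfolding T_def by (rule holomorphic_on_test_fn[OF a(1)])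
  have TX: "T n \<in> X \<and> Hnorm nu (T n) \<le> 1" for n
    using X[OF hol] bounded_test_fn[OF a(1)] Hnorm_le unit a(1) by (simp add: T_def)
  have pointwise: "(\<lambda>n. deriv (T n) z) \<longlonglongrightarrow> 0" if "z \<in> ball 0 1" for z
    using decay[OF a] that by (simp add: T_def)
  obtain r where r: "strict_mono r" and upper:
      "(\<lambda>n. mu (cmod (a (r n))) * cmod (deriv (T (r n)) (a (r n)) * g (a (r n)))) \<longlonglongrightarrow> 0"
    using compact_op_Sg_weighted_deriv_subseq[where b = a, OF mu g compact Y hol TX pointwise] a(1)
    by auto
  have lower: "(\<lambda>n. N / M * cmod (a (r n)) * \<epsilon>) \<longlonglongrightarrow> N / M * 1 * \<epsilon>"
    using LIMSEQ_subseq_LIMSEQ[OF a(2) r] by (intro tendsto_intros) (simp add: o_def)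
  have "N / M * cmod (a (r n)) * \<epsilon> \<le>
      mu (cmod (a (r n))) * cmod (deriv (T (r n)) (a (r n)) * g (a (r n)))" for n
    unfolding T_def using a(1) \<open>0 < M\<close> property_U_pos[OF U, of "cmod (a (r n))"] ratio[of "r n"]
    by (intro weighted_deriv_test_fn_center_ge[OF w mu]) auto
  then have "N / M * 1 * \<epsilon> \<le> 0"
    by (intro tendsto_le[OF sequentially_bot upper lower] always_eventually allI)
  moreover have "0 < N / M * 1 * \<epsilon>" using \<open>0 < \<epsilon>\<close> \<open>0 < M\<close> \<open>0 < N\<close> by simp
  ultimately show False by linarith
qed

lemma compact_op_Sg_iff_to_zero_at_boundary:
  assumes "weight nu" "property_U nu" "weight mu" "g holomorphic_on ball 0 1"
    and "X \<subseteq> Hinf nu" "B0 mu \<subseteq> Y" "Y \<subseteq> Binf mu"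
    and "\<And>f. f holomorphic_on ball 0 1 \<Longrightarrow> \<forall>z\<in>ball 0 1. nu (cmod z) * cmod (f z) \<le> 1 \<Longrightarrow>
      bounded (f ` ball 0 1) \<Longrightarrow> f \<in> X"
  shows "compact_op (Sg g) X (Hnorm nu) Y (Bnorm mu) fsub \<longleftrightarrow> to_zero_at_boundary (Sg_ratio nu mu g)"
  using to_zero_at_boundary_if_compact_op_Sg[OF assms(1-4) _ assms(8,7)]
    compact_op_Sg_if_to_zero_at_boundary[OF assms(1-4) _ assms(5,6)] by blast

theorem theorem11:
  fixes g :: "complex \<Rightarrow> complex" and \<nu> \<mu> :: "real \<Rightarrow> real"
  assumes "g holomorphic_on ball 0 1"
    and "weight \<nu>" and "property_U \<nu>" and "weight \<mu>"
  shows "(compact_op (Sg g) (Hinf \<nu>) (Hnorm \<nu>) (Binf \<mu>) (Bnorm \<mu>) fsub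
            \<longleftrightarrow> to_zero_at_boundary
                  (\<lambda>z. \<mu> (cmod z) / ((1 - (cmod z)\<^sup>2) * \<nu> (cmod z)) * cmod (g z)))
       \<and> (typical_weight \<nu> \<and> typical_weight \<mu> \<longrightarrow>
            (compact_op (Sg g) (H0 \<nu>) (Hnorm \<nu>) (B0 \<mu>) (Bnorm \<mu>) fsub
             \<longleftrightarrow> to_zero_at_boundary
                  (\<lambda>z. \<mu> (cmod z) / ((1 - (cmod z)\<^sup>2) * \<nu> (cmod z)) * cmod (g z))))"
proof -
  have ratio: "(\<lambda>z. \<mu> (cmod z) / ((1 - (cmod z)\<^sup>2) * \<nu> (cmod z)) * cmod (g z)) = Sg_ratio \<nu> \<mu> g"
    by (simp add: fun_eq_iff Sg_ratio_def)
  have "compact_op (Sg g) (Hinf \<nu>) (Hnorm \<nu>) (Binf \<mu>) (Bnorm \<mu>) fsub \<longleftrightarrow>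
      to_zero_at_boundary (Sg_ratio \<nu> \<mu> g)"
    by (rule compact_op_Sg_iff_to_zero_at_boundary[OF assms(2-4,1) order_refl B0_subset_Binf[OF assms(4)]
          order_refl]) (auto intro: HinfI)
  moreover have "compact_op (Sg g) (H0 \<nu>) (Hnorm \<nu>) (B0 \<mu>) (Bnorm \<mu>) fsub \<longleftrightarrow>
      to_zero_at_boundary (Sg_ratio \<nu> \<mu> g)" if "typical_weight \<nu>"
    by (rule compact_op_Sg_iff_to_zero_at_boundary[OF assms(2-4,1) H0_subset_Hinf[OF assms(2)] order_refl
          B0_subset_Binf[OF assms(4)] bounded_holomorphic_in_H0[OF assms(2) that]])
  ultimately show ?thesis unfolding ratio by blast
qed

end
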